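(* Let $q$ be a prime power, $e\in\{1,2\}$, $r$ an integer ($r$ even if $e=1$, $r$ odd if $e=2$), and let $\mathcal S$ be a spread of the non-degenerate quadric $\mathcal Q_{r+2,e}$ of ${\rm PG}(r+2,q)$. If $K$ is a hyperplane of ${\rm PG}(r+2,q)$ such that $K\cap\mathcal Q_{r+2,e}$ is a non-degenerate quadric $\mathcal Q_{r+1,e-1}$ (hyperbolic if $e=1$, parabolic if $e=2$), then at most $q+1$ members of $\mathcal S$ are contained in $K$.
   Context: Notation: $\mathcal Q_{m,e}$ denotes a non-degenerate quadric of ${\rm PG}(m,q)$ which is hyperbolic $\mathcal Q^+(m,q)$ if $e=0$ ($m$ odd), parabolic $\mathcal Q(m,q)$ if $e=1$ ($m$ even), elliptic $\mathcal Q^-(m,q)$ if $e=2$ ($m$ odd). A generator of $\mathcal Q_{m,e}$ is a projective subspace of maximal dimension contained in it; generators are $\frac{m-e-1}{2}$-dimensional. A spread of $\mathcal Q_{m,e}$ is a set of $q^{\frac{m+e-1}{2}}+1$ pairwise disjoint generators. *)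

theory Defs
  imports "HOL-Analysis.Analysis"
begin

text \<open>Projective space PG(n,q) is modelled by the vector space 'a^'n over a finite
field 'a with q = CARD('a) and CARD('n) = n+1; projective subspaces of projective
dimension d are linear subspaces of vector dimension d+1.
A quadratic form is given by a coefficient matrix A: Q(x) = sum_i sum_j A_ij x_i x_j.\<close>

definition qform :: "'a::field^'n^'n \<Rightarrow> 'a^'n \<Rightarrow> 'a" where
  "qform A x = (\<Sum>i\<in>UNIV. \<Sum>j\<in>UNIV. A$i$j * x$i * x$j)"

definition polar :: "'a::field^'n^'n \<Rightarrow> 'a^'n \<Rightarrow> 'a^'n \<Rightarrow> 'a" where
  "polar A x y = qform A (x + y) - qform A x - qform A y"

definition nondeg_on :: "'a::field^'n^'n \<Rightarrow> ('a^'n) set \<Rightarrow> bool" where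
  "nondeg_on A W \<longleftrightarrow> vec.subspace W \<and>
     (\<forall>x\<in>W. x \<noteq> 0 \<and> qform A x = 0 \<longrightarrow> (\<exists>y\<in>W. polar A x y \<noteq> 0))"

definition in_quadric :: "'a::field^'n^'n \<Rightarrow> ('a^'n) set \<Rightarrow> bool" where
  "in_quadric A U \<longleftrightarrow> vec.subspace U \<and> (\<forall>x\<in>U. qform A x = 0)"

definition generator_on :: "'a::field^'n^'n \<Rightarrow> ('a^'n) set \<Rightarrow> ('a^'n) set \<Rightarrow> bool" where
  "generator_on A W U \<longleftrightarrow> U \<subseteq> W \<and> in_quadric A U \<and>
     (\<forall>V. V \<subseteq> W \<and> in_quadric A V \<longrightarrow> vec.dim V \<le> vec.dim U)"

text \<open>Q restricted to W (a subspace of projective dimension m) is the non-degenerate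
quadric Q_{m,e}: non-degenerate, and its generators have projective dimension (m-e-1)/2,
i.e. vector dimension (m+1-e)/2. (For m odd this separates hyperbolic e=0 from
elliptic e=2; for m even it is the parabolic case e=1.)\<close>
definition is_quadric :: "'a::field^'n^'n \<Rightarrow> ('a^'n) set \<Rightarrow> nat \<Rightarrow> nat \<Rightarrow> bool" where
  "is_quadric A W m e \<longleftrightarrow> vec.subspace W \<and> vec.dim W = m + 1 \<and> nondeg_on A W \<and>
     e \<le> m + 1 \<and> even (m + 1 - e) \<and>
     (\<exists>U. generator_on A W U \<and> vec.dim U = (m + 1 - e) div 2)"

definition is_spread :: "'a::{finite,field}^'n^'n \<Rightarrow> nat \<Rightarrow> nat \<Rightarrow> ('a^'n) set set \<Rightarrow> bool" where
  "is_spread A m e S \<longleftrightarrow>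
     (\<forall>U\<in>S. generator_on A UNIV U) \<and>
     (\<forall>U\<in>S. \<forall>V\<in>S. U \<noteq> V \<longrightarrow> U \<inter> V = {0}) \<and>
     card S = CARD('a) ^ ((m + e - 1) div 2) + 1"

end

theory Submission imports Defs begin

text \<open>
  Let \<open>U\<close> be a generator of the section \<open>Q \<inter> K\<close>, \<open>g = dim U\<close>, \<open>n = dim K\<close>, and let
  \<open>P\<close> be the set of vectors of \<open>K\<close> polar to \<open>U\<close>, so that \<open>|P| \<ge> q\<^sup>n / q\<^sup>g\<close>. The singular
  vectors of \<open>P\<close> lie in \<open>U\<close> by maximality of \<open>U\<close>, and a coset \<open>w + U\<close> with \<open>w \<notin> P\<close>
  contains only \<open>|U| / q\<close> singular vectors, since \<open>Q\<close> is affine with non-zero slope along it.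
  This bounds the number of singular vectors of \<open>K\<close> from above. From below, the spread
  members are pairwise disjoint and each meets the hyperplane \<open>K\<close> in at least a hyperplane
  of itself, and in all of itself when it is contained in \<open>K\<close>. Comparing the two counts,
  using the size of the spread, at most \<open>q\<^sup>e\<^sup>-\<^sup>1 + 1\<close> members lie in \<open>K\<close>.
\<close>

lemma card_span_independent:
  fixes B :: "('a::{finite,field}^'n) set"
  assumes "vec.independent B"
  shows "card (vec.span B) = CARD('a) ^ card B"
proof -
  have fin: "finite B" by simp
  let ?comb = "\<lambda>c. \<Sum>v\<in>B. c v *s v"
  have indep: "\<forall>u. (\<Sum>v\<in>B. u v *s v) = 0 \<longrightarrow> (\<forall>v\<in>B. u v = 0)"
    using assms vec.dependent_finite[OF fin] by auto
  have inj: "inj_on ?comb (B \<rightarrow>\<^sub>E UNIV)"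
  proof (rule inj_onI)
    fix c d assume c: "c \<in> B \<rightarrow>\<^sub>E UNIV" and d: "d \<in> B \<rightarrow>\<^sub>E UNIV" and "?comb c = ?comb d"
    then have "(\<Sum>v\<in>B. (c v - d v) *s v) = 0"
      by (simp add: vector_sub_rdistrib sum_subtractf)
    then have "\<forall>v\<in>B. c v - d v = 0"
      using indep[rule_format, of "\<lambda>v. c v - d v"] by simp
    then show "c = d" using c d by (auto intro: PiE_ext)
  qed
  have img: "?comb ` (B \<rightarrow>\<^sub>E UNIV) = vec.span B"
  proof
    show "?comb ` (B \<rightarrow>\<^sub>E UNIV) \<subseteq> vec.span B"
      using vec.span_finite[OF fin] by auto
    show "vec.span B \<subseteq> ?comb ` (B \<rightarrow>\<^sub>E UNIV)"
    proof
      fix x assume "x \<in> vec.span B"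
      then obtain u where "x = ?comb u" using vec.span_finite[OF fin] by auto
      then have "x = ?comb (restrict u B)" by (auto intro: sum.cong)
      moreover have "restrict u B \<in> B \<rightarrow>\<^sub>E UNIV" by simp
      ultimately show "x \<in> ?comb ` (B \<rightarrow>\<^sub>E UNIV)" by (rule image_eqI)
    qed
  qed
  have "card (vec.span B) = card (B \<rightarrow>\<^sub>E (UNIV::'a set))"
    using card_image[OF inj] img by simp
  then show ?thesis by (simp add: card_PiE fin)
qed

lemma card_subspace:
  fixes W :: "('a::{finite,field}^'n) set"
  assumes "vec.subspace W"
  shows "card W = CARD('a) ^ vec.dim W"
proof -
  obtain B where B: "B \<subseteq> W" "vec.independent B" "W \<subseteq> vec.span B" "card B = vec.dim W"
    using vec.basis_exists by blast
  then have "vec.span B = W" using vec.span_subspace[OF B(1) B(3) assms] by simp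
  then show ?thesis using card_span_independent[OF B(2)] B(4) by simp
qed

lemma dim_le_Suc_dim_inter_hyperplane:
  fixes W K :: "('a::field^'n) set"
  assumes W: "vec.subspace W" and K: "vec.subspace K" and hyp: "Suc (vec.dim K) = CARD('n)"
  shows "vec.dim W \<le> Suc (vec.dim (W \<inter> K))"
proof -
  have "vec.dim {x + y |x y. x \<in> W \<and> y \<in> K} \<le> vec.dim (UNIV :: ('a^'n) set)"
    by (rule vec.dim_subset) simp
  then have "vec.dim {x + y |x y. x \<in> W \<and> y \<in> K} \<le> CARD('n)"
    by (simp only: vec_dim_card)
  then show ?thesis using vec.dim_sums_Int[OF W K] hyp by linarith
qed

lemma polar_expand:
  "polar A x y = (\<Sum>i\<in>UNIV. \<Sum>j\<in>UNIV. A$i$j * (x$i * y$j + y$i * x$j))"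
proof -
  have "polar A x y = (\<Sum>i\<in>UNIV. \<Sum>j\<in>UNIV.
      A$i$j * (x+y)$i * (x+y)$j - A$i$j * x$i * x$j - A$i$j * y$i * y$j)"
    unfolding polar_def qform_def by (simp add: sum_subtractf)
  also have "\<dots> = (\<Sum>i\<in>UNIV. \<Sum>j\<in>UNIV. A$i$j * (x$i * y$j + y$i * x$j))"
    by (intro sum.cong refl) (simp add: ring_distribs)
  finally show ?thesis .
qed

lemma polar_sym: "polar A x y = polar A y x"
  unfolding polar_def by (simp add: add.commute)

lemma polar_add_right: "polar A x (y + z) = polar A x y + polar A x z"
  unfolding polar_expand sum.distrib[symmetric] by (intro sum.cong refl) (simp add: ring_distribs)

lemma polar_scale_right: "polar A x (c *s y) = c * polar A x y"
  unfolding polar_expand sum_distrib_left by (intro sum.cong refl) (simp add: ring_distribs mult_ac)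

lemma polar_add_left: "polar A (x + y) z = polar A x z + polar A y z"
  by (simp only: polar_sym[of A _ z] polar_add_right)

lemma polar_diff_left: "polar A (x - y) z = polar A x z - polar A y z"
  using polar_add_left[of A "x - y" y z] by simp

lemma polar_zero_right: "polar A x 0 = 0"
  using polar_scale_right[of A x 0 x] by simp

lemma qform_add: "qform A (x + y) = qform A x + qform A y + polar A x y"
  unfolding polar_def by simp

lemma qform_scale: "qform A (c *s x) = c^2 * qform A x"
  unfolding qform_def sum_distrib_left by (intro sum.cong refl) (simp add: power2_eq_square mult_ac)

lemma qform_zero: "qform A 0 = 0"
  unfolding qform_def by simp

lemma in_quadric_polar_zero:
  assumes "in_quadric A U" "u \<in> U" "u' \<in> U"
  shows "polar A u u' = 0"
  using assms vec.subspace_add[of U u u'] unfolding in_quadric_def polar_def by simp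

definition perp_in :: "'a::field^'n^'n \<Rightarrow> ('a^'n) set \<Rightarrow> ('a^'n) set \<Rightarrow> ('a^'n) set" where
  "perp_in A K U = {v \<in> K. \<forall>u\<in>U. polar A v u = 0}"

lemma card_le_card_perp_in:
  fixes A :: "'a::{finite,field}^'n^'n"
  assumes K: "vec.subspace K" and U: "vec.subspace U"
  shows "card K \<le> CARD('a) ^ vec.dim U * card (perp_in A K U)"
proof -
  obtain B where B: "vec.independent B" "U \<subseteq> vec.span B" "card B = vec.dim U"
    using vec.basis_exists by blast
  have fin: "finite B" by simp
  define L where "L v = restrict (polar A v) B" for v
  \<comment> \<open>\<open>v\<close> is recovered from \<open>L v\<close> and from its difference to a fixed preimage of \<open>L v\<close> in \<open>K\<close>,
    and that difference is polar to \<open>U\<close>.\<close>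
  define F where "F v = (L v, v - inv_into K L (L v))" for v
  have "inj_on F K"
    by (rule inj_onI) (auto simp: F_def)
  moreover have "F ` K \<subseteq> (B \<rightarrow>\<^sub>E UNIV) \<times> perp_in A K U"
  proof
    fix x assume "x \<in> F ` K"
    then obtain v where v: "v \<in> K" "x = F v" by blast
    define w where "w = inv_into K L (L v)"
    have w: "w \<in> K" "L w = L v"
      unfolding w_def using v(1) by (auto intro: inv_into_into f_inv_into_f)
    have "vec.subspace {u. polar A (v - w) u = 0}"
      unfolding vec.subspace_def by (simp add: polar_zero_right polar_add_right polar_scale_right)
    moreover have "B \<subseteq> {u. polar A (v - w) u = 0}"
      using w(2) by (auto simp: L_def polar_diff_left fun_eq_iff split: if_splits)
    ultimately have "U \<subseteq> {u. polar A (v - w) u = 0}"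
      using vec.span_minimal B(2) by blast
    then have "v - w \<in> perp_in A K U"
      unfolding perp_in_def using vec.subspace_diff[OF K v(1) w(1)] by blast
    then show "x \<in> (B \<rightarrow>\<^sub>E UNIV) \<times> perp_in A K U"
      using v(2) unfolding F_def w_def L_def by simp
  qed
  ultimately have "card K \<le> card ((B \<rightarrow>\<^sub>E (UNIV::'a set)) \<times> perp_in A K U)"
    by (rule card_inj_on_le) simp
  then show ?thesis
    using B(3) fin by (simp add: card_cartesian_product card_PiE)
qed

lemma card_level_set_le:
  fixes U :: "('a::{finite,field}^'n) set" and f :: "'a^'n \<Rightarrow> 'a"
  assumes U: "vec.subspace U" and u0: "u0 \<in> U" and a: "a \<noteq> 0"
    and f_shift: "\<And>u t. u \<in> U \<Longrightarrow> f (u + t *s u0) = f u + t * a"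
  shows "CARD('a) * card {u \<in> U. f u = c} \<le> card U"
proof -
  let ?L = "{u \<in> U. f u = c}"
  let ?shift = "\<lambda>(u, t). u + t *s u0"
  have "inj_on ?shift (?L \<times> UNIV)"
  proof (rule inj_onI, clarsimp)
    fix u t u' t' assume eq: "u + t *s u0 = u' + t' *s u0"
      and "u \<in> U" "u' \<in> U" "f u' = f u"
    then have "f u + t * a = f u + t' * a"
      using f_shift by metis
    then have "t = t'" using a by simp
    then show "u = u' \<and> t = t'" using eq by simp
  qed
  moreover have "?shift ` (?L \<times> UNIV) \<subseteq> U"
    using vec.subspace_add[OF U] vec.subspace_scale[OF U u0] by auto
  ultimately have "card (?L \<times> (UNIV::'a set)) \<le> card U"
    by (rule card_inj_on_le) simp
  then show ?thesis by (simp add: card_cartesian_product mult.commute)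
qed

lemma card_singular_in_coset_le:
  fixes A :: "'a::{finite,field}^'n^'n"
  assumes U: "in_quadric A U" and u0: "u0 \<in> U" "polar A w u0 \<noteq> 0"
  shows "CARD('a) * card {u \<in> U. qform A (w + u) = 0} \<le> card U"
proof (rule card_level_set_le[OF _ u0])
  show "vec.subspace U" using U unfolding in_quadric_def by simp
  fix u t assume u: "u \<in> U"
  have "qform A (t *s u0) = 0"
    using U u0(1) unfolding in_quadric_def by (simp add: qform_scale)
  moreover have "polar A (w + u) (t *s u0) = t * polar A w u0"
    using in_quadric_polar_zero[OF U u u0(1)] by (simp add: polar_scale_right polar_add_left)
  ultimately show "qform A (w + (u + t *s u0)) = qform A (w + u) + t * polar A w u0"
    using qform_add[of A "w + u" "t *s u0"] by (simp add: add.assoc)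
qed

lemma card_singular_outside_perp_in:
  fixes A :: "'a::{finite,field}^'n^'n"
  assumes K: "vec.subspace K" and UK: "U \<subseteq> K" and U: "in_quadric A U"
  shows "CARD('a) * card {v \<in> K - perp_in A K U. qform A v = 0} \<le> card (K - perp_in A K U)"
proof -
  let ?N = "K - perp_in A K U"
  let ?T = "{v \<in> ?N. qform A v = 0}"
  let ?fiber = "\<lambda>w. {u \<in> U. qform A (w + u) = 0}"
  have Us: "vec.subspace U" using U unfolding in_quadric_def by simp
  have fiber: "CARD('a) * card (?fiber w) \<le> card U" if w: "w \<in> ?N" for w
  proof -
    obtain u0 where "u0 \<in> U" "polar A w u0 \<noteq> 0"
      using w unfolding perp_in_def by blast
    then show ?thesis by (rule card_singular_in_coset_le[OF U])
  qed
  \<comment> \<open>Double counting: \<open>(v, u) \<mapsto> (v - u, u)\<close> sends a singular \<open>v \<in> K - P\<close> and \<open>u \<in> U\<close> to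
    a \<open>w \<in> K - P\<close> together with a singular vector \<open>w + u\<close> of the coset \<open>w + U\<close>.\<close>
  have inj_on_diff_prod: "inj_on (\<lambda>(v, u). (v - u, u)) (?T \<times> U)"
    by (rule inj_onI) auto
  have "v - u \<in> ?N" if "v \<in> ?N" "u \<in> U" for v u
  proof -
    have "polar A (v - u) u' = polar A v u'" if "u' \<in> U" for u'
      using in_quadric_polar_zero[OF U \<open>u \<in> U\<close> that] by (simp add: polar_diff_left)
    then show ?thesis
      using that UK vec.subspace_diff[OF K] unfolding perp_in_def by auto
  qed
  then have "(\<lambda>(v, u). (v - u, u)) ` (?T \<times> U) \<subseteq> Sigma ?N ?fiber"
    by auto
  with inj_on_diff_prod have "card (?T \<times> U) \<le> card (Sigma ?N ?fiber)"
    by (rule card_inj_on_le) simp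
  then have "card ?T * card U \<le> card (Sigma ?N ?fiber)"
    by (simp add: card_cartesian_product)
  also have "\<dots> = (\<Sum>w\<in>?N. card (?fiber w))"
    by simp
  finally have "CARD('a) * card ?T * card U \<le> (\<Sum>w\<in>?N. CARD('a) * card (?fiber w))"
    by (simp add: sum_distrib_left[symmetric] mult.assoc)
  also have "\<dots> \<le> card ?N * card U"
    using sum_bounded_above[of ?N "\<lambda>w. CARD('a) * card (?fiber w)" "card U"] fiber by simp
  finally have "CARD('a) * card ?T * card U \<le> card ?N * card U" .
  moreover have "card U > 0"
    using vec.subspace_0[OF Us] card_gt_0_iff[of U] by auto
  ultimately show ?thesis by simp
qed

lemma singular_perp_in_subset_generator:
  assumes K: "vec.subspace K" and U: "generator_on A K U"
  shows "{v \<in> perp_in A K U. qform A v = 0} \<subseteq> U"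
proof (rule subsetI, rule ccontr)
  fix v assume v: "v \<in> {v \<in> perp_in A K U. qform A v = 0}" and nv: "v \<notin> U"
  have UK: "U \<subseteq> K" and Uq: "in_quadric A U" and Us: "vec.subspace U"
    using U unfolding generator_on_def in_quadric_def by auto
  define V where "V = vec.span (insert v U)"
  have "V \<subseteq> K"
    unfolding V_def using v UK vec.span_minimal[OF _ K] unfolding perp_in_def by auto
  moreover have "in_quadric A V"
    unfolding in_quadric_def
  proof
    show "vec.subspace V" unfolding V_def by simp
    show "\<forall>x\<in>V. qform A x = 0"
    proof
      fix x assume "x \<in> V"
      then obtain k where k: "x - k *s v \<in> U"
        unfolding V_def vec.span_insert vec.span_eq_iff[THEN iffD2, OF Us] by auto
      have "polar A (x - k *s v) v = 0"
        using v k unfolding perp_in_def by (simp add: polar_sym[of A _ v])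
      then have "qform A x = qform A (x - k *s v) + qform A (k *s v)"
        using qform_add[of A "x - k *s v" "k *s v"] by (simp add: polar_scale_right)
      then show "qform A x = 0"
        using Uq k v unfolding in_quadric_def by (simp add: qform_scale)
    qed
  qed
  ultimately have "vec.dim V \<le> vec.dim U"
    using U unfolding generator_on_def by blast
  moreover have "vec.dim V = vec.dim U + 1"
    unfolding V_def vec.dim_span vec.dim_insert vec.span_eq_iff[THEN iffD2, OF Us] using nv by simp
  ultimately show False by simp
qed

lemma card_singular_le:
  fixes A :: "'a::{finite,field}^'n^'n"
  assumes K: "vec.subspace K" and U: "generator_on A K U"
  shows "CARD('a) * card {v \<in> K. qform A v = 0} + CARD('a) ^ (vec.dim K - vec.dim U)
    \<le> CARD('a) ^ Suc (vec.dim U) + CARD('a) ^ vec.dim K"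
proof -
  let ?q = "CARD('a)" and ?P = "perp_in A K U"
  let ?T = "{v \<in> K - ?P. qform A v = 0}"
  have UK: "U \<subseteq> K" and Uq: "in_quadric A U" and Us: "vec.subspace U"
    using U unfolding generator_on_def in_quadric_def by auto
  have "{v \<in> K. qform A v = 0} \<subseteq> U \<union> ?T"
    using singular_perp_in_subset_generator[OF K U] by auto
  then have "card {v \<in> K. qform A v = 0} \<le> card (U \<union> ?T)"
    by (intro card_mono) simp_all
  also have "\<dots> \<le> card U + card ?T"
    by (rule card_Un_le)
  finally have "card {v \<in> K. qform A v = 0} \<le> card U + card ?T" .
  then have "?q * card {v \<in> K. qform A v = 0} \<le> ?q * (card U + card ?T)"
    by (rule mult_le_mono2)
  also have "\<dots> \<le> ?q ^ Suc (vec.dim U) + card (K - ?P)"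
    using card_singular_outside_perp_in[OF K UK Uq] card_subspace[OF Us]
    by (simp add: add_mult_distrib2)
  finally have "?q * card {v \<in> K. qform A v = 0} \<le> ?q ^ Suc (vec.dim U) + card (K - ?P)" .
  moreover have "card (K - ?P) + card ?P = card K"
  proof -
    have "?P \<subseteq> K" unfolding perp_in_def by auto
    then show ?thesis using card_Diff_subset card_mono by (metis finite le_add_diff_inverse2)
  qed
  moreover have "?q ^ (vec.dim K - vec.dim U) \<le> card ?P"
  proof -
    have "?q ^ vec.dim U * ?q ^ (vec.dim K - vec.dim U) = ?q ^ vec.dim K"
      using vec.dim_subset[OF UK] by (metis le_add_diff_inverse power_add)
    also have "\<dots> \<le> ?q ^ vec.dim U * card ?P"
      using card_le_card_perp_in[OF K Us] card_subspace[OF K] by simp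
    finally show ?thesis by simp
  qed
  ultimately show ?thesis
    using card_subspace[OF K] by linarith
qed

lemma sum_card_punctured_inter_less:
  fixes S :: "'a::finite set set"
  assumes "\<And>W. W \<in> S \<Longrightarrow> W \<subseteq> X"
    and "\<And>W V. W \<in> S \<Longrightarrow> V \<in> S \<Longrightarrow> W \<noteq> V \<Longrightarrow> W \<inter> V = {z}"
    and "z \<in> X" and "z \<in> K"
  shows "(\<Sum>W\<in>S. card (W \<inter> K - {z})) < card (X \<inter> K)"
proof -
  have "(\<Sum>W\<in>S. card (W \<inter> K - {z})) = card (\<Union>W\<in>S. W \<inter> K - {z})"
    using assms(2) by (intro card_UN_disjoint[symmetric]) auto
  also have "\<dots> \<le> card (X \<inter> K - {z})"
    using assms(1) by (intro card_mono) auto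
  also have "\<dots> < card (X \<inter> K)"
    using assms(3,4) by (intro psubset_card_mono) auto
  finally show ?thesis .
qed

lemma card_members_in_hyperplane:
  fixes S :: "('a::{finite,field}^'n) set set"
  assumes S: "\<And>W. W \<in> S \<Longrightarrow> vec.subspace W \<and> vec.dim W = Suc g \<and> W \<subseteq> X"
    and disjoint: "\<And>W V. W \<in> S \<Longrightarrow> V \<in> S \<Longrightarrow> W \<noteq> V \<Longrightarrow> W \<inter> V = {0}"
    and "0 \<in> X" and K: "vec.subspace K" and hyperplane: "Suc (vec.dim K) = CARD('n)"
  shows "card {W \<in> S. W \<subseteq> K} * (CARD('a) ^ Suc g - 1)
    + card {W \<in> S. \<not> W \<subseteq> K} * (CARD('a) ^ g - 1) < card (X \<inter> K)"
proof -
  let ?D = "\<lambda>W. W \<inter> K - {0}"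
  have card_D: "card (?D W) = CARD('a) ^ vec.dim (W \<inter> K) - 1" if "W \<in> S" for W
  proof -
    have WK: "vec.subspace (W \<inter> K)"
      using vec.subspace_inter[OF conjunct1[OF S[OF that]] K] .
    then have "card (?D W) = card (W \<inter> K) - 1"
      using vec.subspace_0 by (intro card_Diff_singleton)
    then show ?thesis using card_subspace[OF WK] by simp
  qed
  have "card (?D W) = CARD('a) ^ Suc g - 1" if "W \<in> S" "W \<subseteq> K" for W
  proof -
    have "W \<inter> K = W" using that(2) by blast
    then show ?thesis using card_D[OF that(1)] S[OF that(1)] by simp
  qed
  then have "(\<Sum>W\<in>{W \<in> S. W \<subseteq> K}. card (?D W)) = (\<Sum>W\<in>{W \<in> S. W \<subseteq> K}. CARD('a) ^ Suc g - 1)"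
    by (intro sum.cong) simp_all
  then have "(\<Sum>W\<in>{W \<in> S. W \<subseteq> K}. card (?D W)) = card {W \<in> S. W \<subseteq> K} * (CARD('a) ^ Suc g - 1)"
    by simp
  moreover have "card {W \<in> S. \<not> W \<subseteq> K} * (CARD('a) ^ g - 1)
      \<le> (\<Sum>W\<in>{W \<in> S. \<not> W \<subseteq> K}. card (?D W))"
  proof -
    have "CARD('a) ^ g - 1 \<le> card (?D W)" if "W \<in> S" for W
    proof -
      have "g \<le> vec.dim (W \<inter> K)"
        using S[OF that] dim_le_Suc_dim_inter_hyperplane[OF _ K hyperplane] by fastforce
      then show ?thesis
        using card_D[OF that] by (simp add: diff_le_mono power_increasing)
    qed
    then show ?thesis
      using sum_bounded_below[of "{W \<in> S. \<not> W \<subseteq> K}" "CARD('a) ^ g - 1"] by simp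
  qed
  moreover have "(\<Sum>W\<in>S. card (?D W))
      = (\<Sum>W\<in>{W \<in> S. W \<subseteq> K}. card (?D W)) + (\<Sum>W\<in>{W \<in> S. \<not> W \<subseteq> K}. card (?D W))"
    using sum.Int_Diff[of S _ "{W. W \<subseteq> K}"] by (simp add: Int_def set_diff_eq)
  moreover have "(\<Sum>W\<in>S. card (?D W)) < card (X \<inter> K)"
    by (rule sum_card_punctured_inter_less[OF _ disjoint \<open>0 \<in> X\<close> vec.subspace_0[OF K]])
      (use S in blast)
  ultimately show ?thesis by linarith
qed

lemma spread_count_bound:
  fixes q a b c d s :: nat
  assumes q: "q \<ge> 2" and a: "a \<ge> 1"
    and singular: "q * s + b * q * a \<le> q * q * a + b * q * q * a * a"
    and members: "c * (q * a - 1) + d * (a - 1) < s"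
    and total: "c + d = b * q * a + 1"
  shows "c \<le> b + 1"
proof -
  have "q * (s + b * a) \<le> q * (q * a + b * q * a * a)"
    using singular by (simp add: algebra_simps)
  then have "s + b * a \<le> q * a + b * q * a * a"
    using q by simp
  then have "int (s + b * a) \<le> int (q * a + b * q * a * a)"
    by (simp only: of_nat_le_iff)
  moreover have "int (c * (q * a - 1) + d * (a - 1)) < int s"
    using members by (simp only: of_nat_less_iff)
  moreover have "int d = int b * int q * int a + 1 - int c"
    using arg_cong[OF total, of int] by simp
  ultimately have "int c * (int q * int a - 1) + (int b * int q * int a + 1 - int c) * (int a - 1)
      + int b * int a < int q * int a + int b * int q * int a * int a"
    using q a by (simp add: of_nat_diff)
  then have "int c * (int a * (int q - 1)) < (int b + 1) * (int a * (int q - 1)) + 1"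
    by (simp add: algebra_simps)
  then have "int c * (int a * (int q - 1)) \<le> (int b + 1) * (int a * (int q - 1))"
    by simp
  moreover have "int a * (int q - 1) > 0" using q a by simp
  ultimately have "int c \<le> int b + 1"
    by (rule mult_right_le_imp_le)
  then show ?thesis by simp
qed

lemma card_spread_members_in_hyperplane_le:
  fixes A :: "'a::{finite,field}^'n^'n" and S :: "('a^'n) set set"
  assumes K: "vec.subspace K" and hyperplane: "Suc (vec.dim K) = CARD('n)"
    and dim_K: "vec.dim K = Suc g + Suc g + k"
    and U: "generator_on A K U" "vec.dim U = Suc g"
    and S: "\<And>W. W \<in> S \<Longrightarrow> in_quadric A W \<and> vec.dim W = Suc g"
    and disjoint: "\<And>W V. W \<in> S \<Longrightarrow> V \<in> S \<Longrightarrow> W \<noteq> V \<Longrightarrow> W \<inter> V = {0}"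
    and card_S: "card S = CARD('a) ^ (Suc g + k) + 1"
  shows "card {W \<in> S. W \<subseteq> K} \<le> CARD('a) ^ k + 1"
proof (rule spread_count_bound)
  let ?q = "CARD('a)" and ?X = "{v. qform A v = 0}"
  show "?q \<ge> 2"
    using card_mono[of UNIV "{0 :: 'a, 1}"] by simp
  show "?q ^ g \<ge> 1" by simp
  have "\<And>W. W \<in> S \<Longrightarrow> vec.subspace W \<and> vec.dim W = Suc g \<and> W \<subseteq> ?X"
    using S unfolding in_quadric_def by blast
  from card_members_in_hyperplane[OF this disjoint _ K hyperplane]
  show "card {W \<in> S. W \<subseteq> K} * (?q * ?q ^ g - 1) + card {W \<in> S. \<not> W \<subseteq> K} * (?q ^ g - 1)
      < card {v \<in> K. qform A v = 0}"
    by (simp add: qform_zero Int_def conj_commute)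
  show "?q * card {v \<in> K. qform A v = 0} + ?q ^ k * ?q * ?q ^ g
      \<le> ?q * ?q * ?q ^ g + ?q ^ k * ?q * ?q * ?q ^ g * ?q ^ g"
    using card_singular_le[OF K U(1)] unfolding dim_K U(2)
    by (simp add: power_add mult_ac)
  have "card {W \<in> S. W \<subseteq> K} + card {W \<in> S. \<not> W \<subseteq> K}
      = card ({W \<in> S. W \<subseteq> K} \<union> {W \<in> S. \<not> W \<subseteq> K})"
    by (rule card_Un_disjoint[symmetric]) auto
  also have "{W \<in> S. W \<subseteq> K} \<union> {W \<in> S. \<not> W \<subseteq> K} = S"
    by blast
  finally show "card {W \<in> S. W \<subseteq> K} + card {W \<in> S. \<not> W \<subseteq> K} = ?q ^ k * ?q * ?q ^ g + 1"
    using card_S by (simp add: power_add mult_ac)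
qed

theorem mainTheorem4:
  fixes A :: "'a::{finite,field}^'n^'n"
    and S :: "('a^'n) set set"
    and K :: "('a^'n) set"
    and r e :: nat
  assumes "e \<in> {1, 2}"
    and "e = 1 \<longrightarrow> even r"
    and "e = 2 \<longrightarrow> odd r"
    and "CARD('n) = r + 3"
    and "is_quadric A UNIV (r + 2) e"
    and "is_spread A (r + 2) e S"
    and "vec.subspace K" and "vec.dim K = r + 2"
    and "is_quadric A K (r + 1) (e - 1)"
  shows "card {U \<in> S. U \<subseteq> K} \<le> CARD('a) + 1"
proof -
  define g where "g = r div 2"
  have r: "r + 3 = Suc g + Suc g + e"
    using assms(1-3) unfolding g_def by (auto; presburger)
  then have dims: "(r + 1 + 1 - (e - 1)) div 2 = Suc g" "(r + 2 + 1 - e) div 2 = Suc g"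
    "(r + 2 + e - 1) div 2 = Suc g + (e - 1)" "r + 2 = Suc g + Suc g + (e - 1)"
    using assms(1) by auto
  obtain U where U: "generator_on A K U" "vec.dim U = Suc g"
    using assms(9) dims(1) unfolding is_quadric_def by auto
  obtain U' where U': "generator_on A UNIV U'" "vec.dim U' = Suc g"
    using assms(5) dims(2) unfolding is_quadric_def by auto
  have members: "in_quadric A W \<and> vec.dim W = Suc g" if "W \<in> S" for W
  proof -
    have W: "generator_on A UNIV W"
      using assms(6) that unfolding is_spread_def by blast
    then have "vec.dim W \<le> vec.dim U'" "vec.dim U' \<le> vec.dim W"
      using U'(1) unfolding generator_on_def by simp_all
    then show ?thesis using W U'(2) unfolding generator_on_def by simp
  qed
  have "card {W \<in> S. W \<subseteq> K} \<le> CARD('a) ^ (e - 1) + 1"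
  proof (rule card_spread_members_in_hyperplane_le[OF assms(7) _ _ U members])
    show "Suc (vec.dim K) = CARD('n)" "vec.dim K = Suc g + Suc g + (e - 1)"
      using assms(4,8) dims(4) by simp_all
    show "\<And>W V. W \<in> S \<Longrightarrow> V \<in> S \<Longrightarrow> W \<noteq> V \<Longrightarrow> W \<inter> V = {0}"
      "card S = CARD('a) ^ (Suc g + (e - 1)) + 1"
      using assms(6) dims(3) unfolding is_spread_def by simp_all
  qed
  also have "CARD('a) ^ (e - 1) \<le> CARD('a)"
    using assms(1) by auto
  finally show ?thesis by simp
qed

end
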